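(* Let $G$ be a connected graph with $n\ge2$ vertices, $m$ edges, maximum degree $\Delta$ and minimum degree $\delta$, and assume $\gamma_n=0$. Then: if $G$ is not regular, $$QE(G)\ >\ \frac{2m+\frac12(\Delta-\delta)^2}{2\Delta-\frac{2m}{n}};$$ and if $G$ is regular, $QE(G)\ge n$, with equality if and only if $G\cong K_{\frac n2,\frac n2}$.
   Context: All graphs are finite, simple and undirected. For a graph $G$ with $n$ vertices and $m$ edges, let $q_1\ge\cdots\ge q_n\ge0$ be the eigenvalues of the signless Laplacian $Q(G)=D(G)+A(G)$ ($D(G)$ the diagonal degree matrix, $A(G)$ the adjacency matrix). The signless Laplacian energy is $QE(G)=\sum_{i=1}^n|q_i-\frac{2m}{n}|$. Let $\gamma_1\ge\gamma_2\ge\cdots\ge\gamma_n\ge0$ denote the numbers $|q_i-\frac{2m}{n}|$, $i=1,\dots,n$, arranged in nonincreasing order. *)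

theory Defs
  imports "Jordan_Normal_Form.Char_Poly"
begin

definition simple_graph :: "nat \<Rightarrow> (nat \<Rightarrow> nat \<Rightarrow> bool) \<Rightarrow> bool" where
  "simple_graph n E \<longleftrightarrow> (\<forall>u v. E u v \<longrightarrow> u < n \<and> v < n \<and> u \<noteq> v \<and> E v u)"

definition degree :: "nat \<Rightarrow> (nat \<Rightarrow> nat \<Rightarrow> bool) \<Rightarrow> nat \<Rightarrow> nat" where
  "degree n E u = card {v. v < n \<and> E u v}"

definition num_edges :: "nat \<Rightarrow> (nat \<Rightarrow> nat \<Rightarrow> bool) \<Rightarrow> nat" where
  "num_edges n E = card {{u, v} | u v. u < n \<and> v < n \<and> E u v}"

definition max_degree :: "nat \<Rightarrow> (nat \<Rightarrow> nat \<Rightarrow> bool) \<Rightarrow> nat" where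
  "max_degree n E = Max (degree n E ` {0..<n})"

definition min_degree :: "nat \<Rightarrow> (nat \<Rightarrow> nat \<Rightarrow> bool) \<Rightarrow> nat" where
  "min_degree n E = Min (degree n E ` {0..<n})"

definition regular :: "nat \<Rightarrow> (nat \<Rightarrow> nat \<Rightarrow> bool) \<Rightarrow> bool" where
  "regular n E \<longleftrightarrow> (\<forall>u<n. \<forall>v<n. degree n E u = degree n E v)"

definition connected_graph :: "nat \<Rightarrow> (nat \<Rightarrow> nat \<Rightarrow> bool) \<Rightarrow> bool" where
  "connected_graph n E \<longleftrightarrow> (\<forall>u<n. \<forall>v<n. E\<^sup>*\<^sup>* u v)"

definition graph_iso :: "nat \<Rightarrow> (nat \<Rightarrow> nat \<Rightarrow> bool) \<Rightarrow> (nat \<Rightarrow> nat \<Rightarrow> bool) \<Rightarrow> bool" where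
  "graph_iso n E F \<longleftrightarrow> (\<exists>f. bij_betw f {0..<n} {0..<n} \<and>
      (\<forall>u<n. \<forall>v<n. E u v \<longleftrightarrow> F (f u) (f v)))"

definition complete_bipartite :: "nat \<Rightarrow> nat \<Rightarrow> nat \<Rightarrow> nat \<Rightarrow> bool" where
  "complete_bipartite a b u v \<longleftrightarrow> u < a + b \<and> v < a + b \<and> ((u < a) \<noteq> (v < a))"

definition signless_laplacian :: "nat \<Rightarrow> (nat \<Rightarrow> nat \<Rightarrow> bool) \<Rightarrow> real mat" where
  "signless_laplacian n E = mat n n (\<lambda>(i, j).
     (if i = j then real (degree n E i) else 0) + (if E i j then 1 else 0))"

text \<open>Q-eigenvalues with multiplicity (roots of the characteristic polynomial; Q is real
  symmetric, so its characteristic polynomial splits over the reals).\<close>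
definition q_eigenvalues :: "nat \<Rightarrow> (nat \<Rightarrow> nat \<Rightarrow> bool) \<Rightarrow> real multiset" where
  "q_eigenvalues n E = proots (char_poly (signless_laplacian n E))"

definition avg_deg :: "nat \<Rightarrow> (nat \<Rightarrow> nat \<Rightarrow> bool) \<Rightarrow> real" where
  "avg_deg n E = 2 * real (num_edges n E) / real n"

definition QE :: "nat \<Rightarrow> (nat \<Rightarrow> nat \<Rightarrow> bool) \<Rightarrow> real" where
  "QE n E = (\<Sum>q\<in>#q_eigenvalues n E. \<bar>q - avg_deg n E\<bar>)"

text \<open>gamma_1 >= ... >= gamma_n: the numbers |q_i - 2m/n| in nonincreasing order,
  as a list indexed from 0 (gamma_i is entry i - 1).\<close>
definition gammas :: "nat \<Rightarrow> (nat \<Rightarrow> nat \<Rightarrow> bool) \<Rightarrow> real list" where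
  "gammas n E = rev (sort (map (\<lambda>q. \<bar>q - avg_deg n E\<bar>)
                          (sorted_list_of_multiset (q_eigenvalues n E))))"

end

(* Every Q-eigenvalue q lies in [0, 2 Delta]: evaluate Q x = q x at an entry of x of maximal
   modulus. If G is connected and q = 2 Delta, this maximal entry propagates along the edges and
   forces G to be Delta-regular. So for non-regular G, with a = 2m/n and M = 2 Delta - a, every
   |q_i - a| < M, whence sum (q_i - a)^2 < M * QE, while
   sum (q_i - a)^2 = tr (Q - a I)^2 = sum (d_i - a)^2 + 2m >= 2m + (Delta - delta)^2 / 2.
   If G is r-regular, then |q_i - r| <= r and sum (q_i - r)^2 = n r give QE >= n, with equality iff
   every q_i - r is 0 or +-r. Since Q - r I is the adjacency matrix A, this happens iff
   tr A^4 = r^2 tr A^2, i.e. iff any two vertices have 0 or r common neighbours, i.e. iff any two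
   neighbourhoods are equal or disjoint; for connected G this means G is K_{r,r}. *)

theory Submission
  imports Defs "Jordan_Normal_Form.Schur_Decomposition"
begin

section \<open>Power sums of the spectrum of a real symmetric matrix\<close>

definition mat_trace :: "'a::comm_ring_1 mat \<Rightarrow> 'a" where
  "mat_trace M = (\<Sum>i<dim_row M. M $$ (i,i))"

lemma mat_trace_mult:
  fixes A B :: "'a::comm_ring_1 mat"
  assumes "A \<in> carrier_mat n m" and "B \<in> carrier_mat m n"
  shows "mat_trace (A * B) = (\<Sum>i<n. \<Sum>j<m. A $$ (i,j) * B $$ (j,i))"
  unfolding mat_trace_def using assms
  by (auto simp: scalar_prod_def row_def col_def lessThan_atLeast0 intro!: sum.cong)

lemma mat_trace_mult_comm:
  fixes A B :: "'a::comm_ring_1 mat"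
  assumes A: "A \<in> carrier_mat n m" and B: "B \<in> carrier_mat m n"
  shows "mat_trace (A * B) = mat_trace (B * A)"
  unfolding mat_trace_mult[OF A B] mat_trace_mult[OF B A]
  by (subst sum.swap) (simp add: mult.commute)

lemma upper_triangular_mult:
  fixes A B :: "'a::comm_ring_1 mat"
  assumes A: "A \<in> carrier_mat n n" and B: "B \<in> carrier_mat n n"
    and uA: "upper_triangular A" and uB: "upper_triangular B"
  shows "upper_triangular (A * B)" and "\<And>i. i < n \<Longrightarrow> (A * B) $$ (i,i) = A $$ (i,i) * B $$ (i,i)"
proof -
  have entry: "(A * B) $$ (i,j) = (\<Sum>k\<in>{0..<n}. A $$ (i,k) * B $$ (k,j))" if "i < n" "j < n" for i j
    using that A B by (simp add: scalar_prod_def row_def col_def)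
  have vanish: "A $$ (i,k) * B $$ (k,j) = 0" if "i < n" "j < n" "k < n" "j \<le> i" "k \<noteq> i \<or> j \<noteq> i" for i j k
  proof (cases "k < i")
    case True then show ?thesis using uA A that by (auto simp: upper_triangular_def)
  next
    case False then have "j < k" using that by auto
    then show ?thesis using uB B that by (auto simp: upper_triangular_def)
  qed
  show "upper_triangular (A * B)"
  proof
    fix i j assume "i < dim_row (A * B)" "j < i"
    then show "(A * B) $$ (i, j) = 0" using A vanish by (subst entry) (auto intro: sum.neutral)
  qed
  show "(A * B) $$ (i,i) = A $$ (i,i) * B $$ (i,i)" if "i < n" for i
    using that by (subst entry) (auto simp: sum.remove[of _ i] vanish intro!: sum.neutral)
qed

lemma upper_triangular_pow:
  fixes A :: "'a::comm_ring_1 mat"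
  assumes A: "A \<in> carrier_mat n n" and uA: "upper_triangular A"
  shows "upper_triangular (A ^\<^sub>m k) \<and> (\<forall>i<n. (A ^\<^sub>m k) $$ (i,i) = (A $$ (i,i)) ^ k)"
proof (induct k)
  case (Suc k)
  have "A ^\<^sub>m k \<in> carrier_mat n n" using A by simp
  from upper_triangular_mult[OF this A] Suc uA show ?case by simp
qed (use A in auto)

text \<open>Conjugate a Schur form: the shift by \<open>c\<close> and the power act on the triangular factor,
  whose diagonal consists of the roots of the characteristic polynomial.\<close>
lemma mat_trace_shift_pow:
  fixes M :: "'a::conjugatable_ordered_field mat"
  assumes M: "M \<in> carrier_mat n n" and cp: "char_poly M = (\<Prod>e\<leftarrow>es. [:-e, 1:])"
  shows "mat_trace ((M + (-c) \<cdot>\<^sub>m 1\<^sub>m n) ^\<^sub>m k) = (\<Sum>e\<leftarrow>es. (e - c) ^ k)"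
proof -
  obtain B P Q where sd: "schur_decomposition M es = (B,P,Q)"
    by (cases "schur_decomposition M es") auto
  from schur_decomposition[OF M cp sd] have
    sw: "similar_mat_wit M B P Q" and uB: "upper_triangular B" and dB: "diag_mat B = es" by auto
  from similar_mat_witD2[OF M sw] have B: "B \<in> carrier_mat n n" and P: "P \<in> carrier_mat n n"
    and Q: "Q \<in> carrier_mat n n" and PQ: "P * Q = 1\<^sub>m n" and QP: "Q * P = 1\<^sub>m n"
    and MB: "M = P * B * Q" by auto
  define D where "D = (-c) \<cdot>\<^sub>m (1\<^sub>m n :: 'a mat)"
  have D: "D \<in> carrier_mat n n" unfolding D_def by simp
  have "P * D = (-c) \<cdot>\<^sub>m P"
    unfolding D_def using mult_smult_distrib[OF P one_carrier_mat, of "-c"] P by simp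
  then have "P * D * Q = (-c) \<cdot>\<^sub>m (P * Q)" using mult_smult_assoc_mat[OF P Q] by simp
  then have "P * D * Q = D" unfolding PQ D_def .
  then have "M + D = P * (B + D) * Q"
    using MB P B D Q by (simp add: mult_add_distrib_mat add_mult_distrib_mat[of _ n n])
  then have "similar_mat_wit (M + D) (B + D) P Q"
    using M B D P Q PQ QP by (intro similar_mat_witI) auto
  then have pow: "(M + D) ^\<^sub>m k = P * ((B + D) ^\<^sub>m k) * Q" by (rule similar_mat_wit_pow_id)
  have BD: "B + D \<in> carrier_mat n n" using B D by simp
  then have BDk: "(B + D) ^\<^sub>m k \<in> carrier_mat n n" by simp
  have uBD: "upper_triangular (B + D)" using uB B D unfolding D_def upper_triangular_def by auto
  have "mat_trace ((M + D) ^\<^sub>m k) = mat_trace (Q * (P * ((B + D) ^\<^sub>m k)))"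
    unfolding pow using P Q BDk by (intro mat_trace_mult_comm[of _ n n]) auto
  also have "Q * (P * ((B + D) ^\<^sub>m k)) = (B + D) ^\<^sub>m k"
    using P Q BDk QP by (simp add: assoc_mult_mat[symmetric, of Q n n P n _ n] left_mult_one_mat[OF BDk])
  also have "mat_trace ((B + D) ^\<^sub>m k) = (\<Sum>i<n. (B $$ (i,i) - c) ^ k)"
    unfolding mat_trace_def using upper_triangular_pow[OF BD uBD, of k] B D unfolding D_def
    by (auto intro!: sum.cong)
  also have "\<dots> = (\<Sum>e\<leftarrow>es. (e - c) ^ k)"
    unfolding dB[symmetric] diag_mat_def using B by (simp add: sum_list_sum_nth lessThan_atLeast0)
  finally show ?thesis unfolding D_def .
qed

text \<open>The Rayleigh quotient \<open>v\<^sup>* M v / v\<^sup>* v\<close> of a real symmetric matrix is real.\<close>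
lemma real_sym_eigenvalue_real:
  fixes M :: "real mat" and a :: complex
  assumes M: "M \<in> carrier_mat n n" and sym: "\<And>i j. i < n \<Longrightarrow> j < n \<Longrightarrow> M $$ (i,j) = M $$ (j,i)"
    and ev: "eigenvalue (map_mat of_real M) a"
  shows "Im a = 0"
proof -
  let ?Mc = "map_mat (of_real :: real \<Rightarrow> complex) M"
  from ev obtain v where "eigenvector ?Mc v a" unfolding eigenvalue_def by auto
  then have vc: "v \<in> carrier_vec n" and v0: "v \<noteq> 0\<^sub>v n" and Mv: "?Mc *\<^sub>v v = a \<cdot>\<^sub>v v"
    using M unfolding eigenvector_def by auto
  have row: "(\<Sum>j<n. of_real (M $$ (i,j)) * v $ j) = a * v $ i" if "i < n" for i
  proof -
    have "(?Mc *\<^sub>v v) $ i = (\<Sum>j<n. of_real (M $$ (i,j)) * v $ j)"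
      using that vc M by (simp add: scalar_prod_def row_def lessThan_atLeast0)
    then show ?thesis using Mv that vc by simp
  qed
  define s where "s = (\<Sum>i<n. \<Sum>j<n. cnj (v $ i) * of_real (M $$ (i,j)) * v $ j)"
  define N where "N = (\<Sum>i<n. cnj (v $ i) * v $ i)"
  have "s = (\<Sum>i<n. cnj (v $ i) * (\<Sum>j<n. of_real (M $$ (i,j)) * v $ j))"
    unfolding s_def by (simp add: sum_distrib_left mult.assoc)
  also have "\<dots> = (\<Sum>i<n. cnj (v $ i) * (a * v $ i))" using row by simp
  also have "\<dots> = a * N" unfolding N_def by (simp add: sum_distrib_left algebra_simps)
  finally have sN: "s = a * N" .
  have "cnj s = (\<Sum>i<n. \<Sum>j<n. v $ i * of_real (M $$ (i,j)) * cnj (v $ j))"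
    unfolding s_def by simp
  also have "\<dots> = (\<Sum>j<n. \<Sum>i<n. v $ i * of_real (M $$ (i,j)) * cnj (v $ j))"
    by (rule sum.swap)
  also have "\<dots> = s" unfolding s_def
    by (intro sum.cong refl) (simp add: sym mult.commute mult.left_commute)
  finally have "Im s = 0" by (metis cnj.sel(2) neg_equal_zero)
  have NI: "Im N = 0" and NR: "Re N = (\<Sum>i<n. (Re (v $ i))^2 + (Im (v $ i))^2)" unfolding N_def
    by (simp_all add: Im_sum Re_sum power2_eq_square algebra_simps)
  obtain i where i: "i < n" "v $ i \<noteq> 0" using vc v0 by force
  then have "0 < (Re (v $ i))\<^sup>2 + (Im (v $ i))\<^sup>2" by (simp add: complex_eq_iff sum_power2_gt_zero_iff)
  then have "Re N > 0" unfolding NR by (intro sum_pos2[of _ i]) (use i in auto)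
  with arg_cong[OF sN, of Im] \<open>Im s = 0\<close> NI show ?thesis by simp
qed

lemma real_sym_char_poly_splits:
  fixes M :: "real mat"
  assumes M: "M \<in> carrier_mat n n" and sym: "\<And>i j. i < n \<Longrightarrow> j < n \<Longrightarrow> M $$ (i,j) = M $$ (j,i)"
  obtains es where "char_poly M = (\<Prod>e\<leftarrow>es. [:-e, 1:])"
proof -
  let ?Mc = "map_mat (of_real :: real \<Rightarrow> complex) M"
  have Mc: "?Mc \<in> carrier_mat n n" using M by simp
  from char_poly_factorized[OF Mc] obtain as where as: "char_poly ?Mc = (\<Prod>a\<leftarrow>as. [:- a, 1:])"
    by blast
  have real: "a = of_real (Re a)" if "a \<in> set as" for a
  proof -
    have "poly (char_poly ?Mc) a = 0" unfolding as using that by (rule linear_poly_root)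
    then have "eigenvalue ?Mc a" using eigenvalue_root_char_poly[OF Mc] by simp
    from real_sym_eigenvalue_real[OF M sym this] show ?thesis by (simp add: complex_eq_iff)
  qed
  interpret p: map_poly_inj_comm_ring_hom "of_real :: real \<Rightarrow> complex" ..
  have "map_poly of_real (char_poly M) = char_poly ?Mc"
    by (rule of_real_hom.char_poly_hom[OF M, symmetric])
  also have "\<dots> = (\<Prod>e\<leftarrow>map Re as. [:- of_real e, 1:])"
    unfolding as map_map o_def by (rule arg_cong[of _ _ prod_list], rule map_cong[OF refl], subst real, auto)
  also have "\<dots> = map_poly of_real (\<Prod>e\<leftarrow>map Re as. [:-e, 1:])"
    by (simp add: p.hom_prod_list o_def)
  finally show ?thesis by (intro that) (rule p.injectivity)
qed

lemma proots_prod_linear_factors: "proots (\<Prod>e\<leftarrow>es. [:-e, 1:]) = mset (es :: 'a::idom list)"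
proof (induct es)
  case (Cons a es)
  have "(\<Prod>e\<leftarrow>es. [:-e, 1:]) \<noteq> 0" by (auto simp: prod_list_zero_iff)
  then have "proots (\<Prod>e\<leftarrow>a # es. [:-e, 1:]) = proots [:-a, 1:] + proots (\<Prod>e\<leftarrow>es. [:-e, 1:])"
    by (simp only: list.map prod_list.Cons) (rule proots_mult, auto)
  then show ?case using Cons by simp
qed simp

lemma eigenvalue_if_in_proots_char_poly:
  fixes M :: "'a::field mat"
  assumes M: "M \<in> carrier_mat n n" and e: "e \<in># proots (char_poly M)"
  shows "eigenvalue M e"
proof -
  have "char_poly M \<noteq> 0" using degree_monic_char_poly[OF M] by auto
  with e have "poly (char_poly M) e = 0" by simp
  then show ?thesis using eigenvalue_root_char_poly[OF M] by simp
qed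

lemma power_sum_proots_char_poly_real_sym:
  fixes M :: "real mat"
  assumes M: "M \<in> carrier_mat n n" and sym: "\<And>i j. i < n \<Longrightarrow> j < n \<Longrightarrow> M $$ (i,j) = M $$ (j,i)"
  shows "(\<Sum>e\<in>#proots (char_poly M). (e - c) ^ k) = mat_trace ((M + (-c) \<cdot>\<^sub>m 1\<^sub>m n) ^\<^sub>m k)"
proof -
  obtain es where es: "char_poly M = (\<Prod>e\<leftarrow>es. [:-e, 1:])"
    using real_sym_char_poly_splits[OF M sym] by blast
  show ?thesis
    unfolding mat_trace_shift_pow[OF M es] es proots_prod_linear_factors
    by (simp add: sum_mset_sum_list[symmetric])
qed

section \<open>Sums of squares against sums of absolute values\<close>

lemma sum_mset_pos:
  fixes f :: "'a \<Rightarrow> real"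
  assumes "\<And>x. x \<in># A \<Longrightarrow> 0 \<le> f x" and "y \<in># A" and "0 < f y"
  shows "0 < (\<Sum>x\<in>#A. f x)"
proof -
  obtain B where A: "A = add_mset y B" using multi_member_split[OF assms(2)] by blast
  have "(\<Sum>x\<in>#B. 0) \<le> (\<Sum>x\<in>#B. f x)" using assms(1) A by (intro sum_mset_mono) auto
  then show ?thesis using A assms(3) by simp
qed

lemma sum_mset_nonneg_eq_0_iff:
  fixes f :: "'a \<Rightarrow> real"
  assumes "\<And>x. x \<in># A \<Longrightarrow> 0 \<le> f x"
  shows "(\<Sum>x\<in>#A. f x) = 0 \<longleftrightarrow> (\<forall>x\<in>#A. f x = 0)"
proof (rule iffI, rule ccontr)
  assume "(\<Sum>x\<in>#A. f x) = 0" and "\<not> (\<forall>x\<in>#A. f x = 0)"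
  then obtain y where "y \<in># A" "0 < f y" using assms by force
  with sum_mset_pos[of A f] assms \<open>(\<Sum>x\<in>#A. f x) = 0\<close> show False by simp
qed (simp add: sum_mset.neutral)

lemma bound_mult_sum_mset_abs_minus_sum_mset_square:
  fixes f :: "'a \<Rightarrow> real"
  shows "b * (\<Sum>x\<in>#A. \<bar>f x\<bar>) - (\<Sum>x\<in>#A. (f x)\<^sup>2) = (\<Sum>x\<in>#A. \<bar>f x\<bar> * (b - \<bar>f x\<bar>))"
  by (induct A) (simp_all add: algebra_simps power2_eq_square)

lemma sum_mset_square_le_bound_mult_sum_mset_abs:
  fixes f :: "'a \<Rightarrow> real"
  assumes "\<And>x. x \<in># A \<Longrightarrow> \<bar>f x\<bar> \<le> b"
  shows "(\<Sum>x\<in>#A. (f x)\<^sup>2) \<le> b * (\<Sum>x\<in>#A. \<bar>f x\<bar>)"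
proof -
  have "(\<Sum>x\<in>#A. 0) \<le> (\<Sum>x\<in>#A. \<bar>f x\<bar> * (b - \<bar>f x\<bar>))"
    using assms by (intro sum_mset_mono) simp
  then have "0 \<le> (\<Sum>x\<in>#A. \<bar>f x\<bar> * (b - \<bar>f x\<bar>))" by simp
  then show ?thesis using bound_mult_sum_mset_abs_minus_sum_mset_square[of b f A] by linarith
qed

lemma sum_mset_square_less_bound_mult_sum_mset_abs:
  fixes f :: "'a \<Rightarrow> real"
  assumes "\<And>x. x \<in># A \<Longrightarrow> \<bar>f x\<bar> < b" and "y \<in># A" and "f y \<noteq> 0"
  shows "(\<Sum>x\<in>#A. (f x)\<^sup>2) < b * (\<Sum>x\<in>#A. \<bar>f x\<bar>)"
proof -
  have "0 < (\<Sum>x\<in>#A. \<bar>f x\<bar> * (b - \<bar>f x\<bar>))"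
    using assms by (intro sum_mset_pos[of A _ y]) (auto simp: less_imp_le)
  then show ?thesis using bound_mult_sum_mset_abs_minus_sum_mset_square[of b f A] by linarith
qed

lemma sum_mset_square_eq_bound_mult_sum_mset_abs_iff:
  fixes f :: "'a \<Rightarrow> real"
  assumes "\<And>x. x \<in># A \<Longrightarrow> \<bar>f x\<bar> \<le> b"
  shows "(\<Sum>x\<in>#A. (f x)\<^sup>2) = b * (\<Sum>x\<in>#A. \<bar>f x\<bar>) \<longleftrightarrow>
         (\<forall>x\<in>#A. f x = 0 \<or> \<bar>f x\<bar> = b)"
proof -
  have "(\<Sum>x\<in>#A. (f x)\<^sup>2) = b * (\<Sum>x\<in>#A. \<bar>f x\<bar>) \<longleftrightarrow> (\<Sum>x\<in>#A. \<bar>f x\<bar> * (b - \<bar>f x\<bar>)) = 0"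
    using bound_mult_sum_mset_abs_minus_sum_mset_square[of b f A] by linarith
  also have "\<dots> \<longleftrightarrow> (\<forall>x\<in>#A. \<bar>f x\<bar> * (b - \<bar>f x\<bar>) = 0)"
    using assms by (intro sum_mset_nonneg_eq_0_iff) simp
  finally show ?thesis by auto
qed

lemma sum_square_eq_bound_mult_sum_abs_iff:
  fixes f :: "'a \<Rightarrow> real"
  assumes "finite A" and "\<And>x. x \<in> A \<Longrightarrow> \<bar>f x\<bar> \<le> b"
  shows "(\<Sum>x\<in>A. (f x)\<^sup>2) = b * (\<Sum>x\<in>A. \<bar>f x\<bar>) \<longleftrightarrow>
         (\<forall>x\<in>A. f x = 0 \<or> \<bar>f x\<bar> = b)"
  using sum_mset_square_eq_bound_mult_sum_mset_abs_iff[of "mset_set A" f b] assms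
  by (simp add: sum_unfold_sum_mset)

lemma half_square_diff_le_sum_squares: "(x - y)\<^sup>2 / 2 \<le> (x - a)\<^sup>2 + (y - a :: real)\<^sup>2"
proof -
  have "(x - a)\<^sup>2 + (y - a)\<^sup>2 - (x - y)\<^sup>2 / 2 = (x + y - 2 * a)\<^sup>2 / 2"
    by (simp add: power2_eq_square field_simps)
  moreover have "0 \<le> (x + y - 2 * a)\<^sup>2 / 2" by simp
  ultimately show ?thesis by linarith
qed

section \<open>Simple graphs and their signless Laplacian\<close>

lemma graph_iso_complete_bipartite_if_bipartition:
  assumes T: "T \<subseteq> {..<n}" "card T = a" "card ({..<n} - T) = b"
    and E: "\<And>u v. u < n \<Longrightarrow> v < n \<Longrightarrow> E u v \<longleftrightarrow> (u \<in> T) \<noteq> (v \<in> T)"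
  shows "graph_iso n E (complete_bipartite a b)"
proof -
  define S where "S = {..<n} - T"
  have fin: "finite T" "finite S" using T(1) finite_subset unfolding S_def by auto
  have n: "n = a + b" using T card_Diff_subset[OF fin(1) T(1)] card_mono[OF _ T(1)] by simp
  obtain g1 where g1: "bij_betw g1 T {0..<a}" using bij_betw_iff_card[of T "{0..<a}"] fin T by auto
  obtain g2 where g2: "bij_betw g2 S {a..<a+b}"
    using bij_betw_iff_card[of S "{a..<a+b}"] fin T unfolding S_def by auto
  define f where "f u = (if u \<in> T then g1 u else g2 u)" for u
  have "bij_betw f T {0..<a}" using g1 by (rule bij_betw_cong[THEN iffD1, rotated]) (simp add: f_def)
  moreover have "bij_betw f S {a..<a+b}"
    using g2 by (rule bij_betw_cong[THEN iffD1, rotated]) (simp add: f_def S_def)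
  ultimately have "bij_betw f (T \<union> S) ({0..<a} \<union> {a..<a+b})"
    by (rule bij_betw_combine) (simp add: ivl_disj_int)
  moreover have "T \<union> S = {0..<n}" "{0..<a} \<union> {a..<a+b} = {0..<n}" using T(1) n unfolding S_def by auto
  ultimately have bij: "bij_betw f {0..<n} {0..<n}" by simp
  have side: "f u < a \<longleftrightarrow> u \<in> T" "f u < a + b" if "u < n" for u
    using bij_betw_apply[OF g1, of u] bij_betw_apply[OF g2, of u] that unfolding f_def S_def by auto
  show ?thesis
    unfolding graph_iso_def
  proof (intro exI[of _ f] conjI allI impI)
    fix u v assume "u < n" "v < n"
    then show "E u v \<longleftrightarrow> complete_bipartite a b (f u) (f v)"
      using side E unfolding complete_bipartite_def by simp
  qed (rule bij)
qed

locale sgraph =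
  fixes n :: nat and E :: "nat \<Rightarrow> nat \<Rightarrow> bool"
  assumes simple: "simple_graph n E"
begin

abbreviation deg :: "nat \<Rightarrow> nat" where "deg i \<equiv> degree n E i"

abbreviation Q :: "real mat" where "Q \<equiv> signless_laplacian n E"

definition nbrs :: "nat \<Rightarrow> nat set" where "nbrs i = {j. j < n \<and> E i j}"

lemma edgeD: "E u v \<Longrightarrow> u < n \<and> v < n \<and> u \<noteq> v \<and> E v u"
  using simple unfolding simple_graph_def by blast

lemma mem_nbrs_iff: "j \<in> nbrs i \<longleftrightarrow> j < n \<and> E i j"
  unfolding nbrs_def by simp

lemma finite_nbrs [simp]: "finite (nbrs i)"
  unfolding nbrs_def by auto

lemma nbrs_subset: "nbrs i \<subseteq> {..<n}"
  unfolding nbrs_def by auto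

lemma degree_eq_card_nbrs: "deg i = card (nbrs i)"
  unfolding degree_def nbrs_def ..

lemma sum_adjacent: "(\<Sum>j<n. if E i j then f j else 0) = (\<Sum>j\<in>nbrs i. f j)"
  unfolding nbrs_def by (simp add: sum.inter_filter[symmetric] Collect_conj_eq lessThan_def Int_commute)

lemma sum_degree_eq_twice_num_edges: "(\<Sum>i<n. deg i) = 2 * num_edges n E"
proof -
  define edges where "edges = {{u, v} | u v. u < n \<and> v < n \<and> E u v}"
  have fin_edges: "finite edges"
    unfolding edges_def by (rule finite_subset[of _ "Pow {..<n}"]) auto
  have "deg i = card {e \<in> edges. i \<in> e}" if "i < n" for i
  proof -
    have "inj_on (\<lambda>v. {i, v}) (nbrs i)" by (auto simp: inj_on_def doubleton_eq_iff)
    moreover have "(\<lambda>v. {i, v}) ` nbrs i = {e \<in> edges. i \<in> e}"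
    proof
      show "(\<lambda>v. {i, v}) ` nbrs i \<subseteq> {e \<in> edges. i \<in> e}"
        using that by (auto simp: edges_def mem_nbrs_iff) blast
      show "{e \<in> edges. i \<in> e} \<subseteq> (\<lambda>v. {i, v}) ` nbrs i"
      proof safe
        fix e assume "e \<in> edges" "i \<in> e"
        then obtain u v where "e = {u, v}" "E u v" "i = u \<or> i = v" unfolding edges_def by auto
        then consider "e = {i, v}" "E i v" | "e = {i, u}" "E i u"
          by (auto simp: insert_commute dest: edgeD)
        then show "e \<in> (\<lambda>v. {i, v}) ` nbrs i"
          by cases (auto intro!: imageI simp: mem_nbrs_iff dest: edgeD)
      qed
    qed
    ultimately show ?thesis by (metis card_image degree_eq_card_nbrs)
  qed
  then have "(\<Sum>i<n. deg i) = (\<Sum>i<n. card {e \<in> edges. i \<in> e})" by simp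
  also have "\<dots> = 2 * card edges"
  proof (rule sum_multicount[OF _ fin_edges], simp, intro ballI)
    fix e assume "e \<in> edges"
    then obtain u v where "e = {u, v}" "u < n" "v < n" "u \<noteq> v"
      unfolding edges_def by (auto dest: edgeD)
    then have "{i \<in> {..<n}. i \<in> e} = {u, v}" by auto
    then show "card {i \<in> {..<n}. i \<in> e} = 2" using \<open>u \<noteq> v\<close> by simp
  qed
  finally show ?thesis unfolding num_edges_def edges_def .
qed

lemma sum_real_degree: "(\<Sum>i<n. real (deg i)) = 2 * real (num_edges n E)"
  using sum_degree_eq_twice_num_edges by (metis of_nat_mult of_nat_numeral of_nat_sum)

lemma avg_deg_eq_mean_degree: "avg_deg n E = (\<Sum>i<n. real (deg i)) / real n"
  unfolding avg_deg_def sum_real_degree ..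

lemma signless_laplacian_carrier: "Q \<in> carrier_mat n n"
  unfolding signless_laplacian_def by simp

lemma signless_laplacian_entry: "i < n \<Longrightarrow> j < n \<Longrightarrow>
    Q $$ (i,j) = (if i = j then real (deg i) else 0) + (if E i j then 1 else 0)"
  unfolding signless_laplacian_def by simp

lemma signless_laplacian_sym: "i < n \<Longrightarrow> j < n \<Longrightarrow> Q $$ (i,j) = Q $$ (j,i)"
  unfolding signless_laplacian_entry using edgeD by auto

lemma signless_laplacian_mult_vec:
  assumes v: "v \<in> carrier_vec n" and i: "i < n"
  shows "(Q *\<^sub>v v) $ i = real (deg i) * v $ i + (\<Sum>j\<in>nbrs i. v $ j)"
proof -
  have "(Q *\<^sub>v v) $ i = (\<Sum>j<n. Q $$ (i,j) * v $ j)"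
    using i v signless_laplacian_carrier by (simp add: scalar_prod_def row_def lessThan_atLeast0)
  also have "\<dots> = (\<Sum>j<n. if i = j then real (deg i) * v $ j else 0) + (\<Sum>j<n. if E i j then v $ j else 0)"
    unfolding sum.distrib[symmetric]
    by (intro sum.cong refl) (auto simp: signless_laplacian_entry i dest: edgeD)
  finally show ?thesis using i by (simp add: sum_adjacent)
qed

lemma q_eigenvalue_eigenvector:
  assumes "e \<in># q_eigenvalues n E"
  obtains x where "\<exists>i<n. x i \<noteq> 0" and "\<And>i. i < n \<Longrightarrow> e * x i = real (deg i) * x i + (\<Sum>j\<in>nbrs i. x j)"
proof -
  have "eigenvalue Q e" using assms unfolding q_eigenvalues_def
    by (rule eigenvalue_if_in_proots_char_poly[OF signless_laplacian_carrier])
  then obtain v where "eigenvector Q v e" unfolding eigenvalue_def by auto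
  then have vc: "v \<in> carrier_vec n" and v0: "v \<noteq> 0\<^sub>v n" and Qv: "Q *\<^sub>v v = e \<cdot>\<^sub>v v"
    using signless_laplacian_carrier unfolding eigenvector_def by auto
  show ?thesis
  proof (rule that[of "\<lambda>i. v $ i"])
    show "\<exists>i<n. v $ i \<noteq> 0" using vc v0 by force
    show "e * v $ i = real (deg i) * v $ i + (\<Sum>j\<in>nbrs i. v $ j)" if "i < n" for i
      using Qv that vc signless_laplacian_mult_vec[OF vc that] by (metis index_smult_vec(1) carrier_vecD)
  qed
qed

lemma power_sum_q_eigenvalues:
  "(\<Sum>e\<in>#q_eigenvalues n E. (e - c) ^ k) = mat_trace ((Q + (-c) \<cdot>\<^sub>m 1\<^sub>m n) ^\<^sub>m k)"
  unfolding q_eigenvalues_def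
  by (rule power_sum_proots_char_poly_real_sym[OF signless_laplacian_carrier signless_laplacian_sym])

lemma sum_q_eigenvalues_shift_square:
  "(\<Sum>e\<in>#q_eigenvalues n E. (e - c)\<^sup>2) = (\<Sum>i<n. (real (deg i) - c)\<^sup>2) + 2 * real (num_edges n E)"
proof -
  define M where "M = Q + (-c) \<cdot>\<^sub>m 1\<^sub>m n"
  have M: "M \<in> carrier_mat n n" unfolding M_def using signless_laplacian_carrier by simp
  have Me: "M $$ (i,j) = (if i = j then real (deg i) - c else 0) + (if E i j then 1 else 0)"
    if "i < n" "j < n" for i j
    unfolding M_def using that signless_laplacian_carrier by (auto simp: signless_laplacian_entry)
  have "(\<Sum>e\<in>#q_eigenvalues n E. (e - c)\<^sup>2) = mat_trace (M * M)"
    unfolding power_sum_q_eigenvalues M_def by (simp add: numeral_2_eq_2)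
  also have "\<dots> = (\<Sum>i<n. \<Sum>j<n. M $$ (i,j) * M $$ (j,i))" by (rule mat_trace_mult[OF M M])
  also have "\<dots> = (\<Sum>i<n. \<Sum>j<n. (if i = j then (real (deg i) - c)\<^sup>2 else 0) + (if E i j then 1 else 0))"
    by (intro sum.cong refl) (auto simp: Me power2_eq_square dest: edgeD)
  also have "\<dots> = (\<Sum>i<n. (real (deg i) - c)\<^sup>2 + real (deg i))"
    using sum_adjacent[where f = "\<lambda>_. 1::real"] by (simp add: sum.distrib degree_eq_card_nbrs)
  also have "\<dots> = (\<Sum>i<n. (real (deg i) - c)\<^sup>2) + 2 * real (num_edges n E)"
    unfolding sum.distrib sum_real_degree ..
  finally show ?thesis .
qed

lemma degree_le_max_degree: "i < n \<Longrightarrow> deg i \<le> max_degree n E"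
  unfolding max_degree_def by (rule Max_ge) auto

lemma min_degree_le_degree: "i < n \<Longrightarrow> min_degree n E \<le> deg i"
  unfolding min_degree_def by (rule Min_le) auto

lemma max_degree_attained:
  assumes "0 < n" obtains i where "i < n" "deg i = max_degree n E"
proof -
  have "max_degree n E \<in> deg ` {0..<n}" unfolding max_degree_def using assms by (intro Max_in) auto
  then show ?thesis using that by auto
qed

lemma min_degree_attained:
  assumes "0 < n" obtains i where "i < n" "deg i = min_degree n E"
proof -
  have "min_degree n E \<in> deg ` {0..<n}" unfolding min_degree_def using assms by (intro Min_in) auto
  then show ?thesis using that by auto
qed

lemma regular_iff_min_degree_eq_max_degree:
  assumes "0 < n" shows "regular n E \<longleftrightarrow> min_degree n E = max_degree n E"
  using assms min_degree_attained max_degree_attained degree_le_max_degree min_degree_le_degree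
  unfolding regular_def by (metis le_antisym)

lemma degree_pos_if_connected:
  assumes conn: "connected_graph n E" and n: "2 \<le> n" and i: "i < n"
  shows "0 < deg i"
proof -
  define j :: nat where "j = (if i = 0 then 1 else 0)"
  have "j < n" "j \<noteq> i" using n unfolding j_def by auto
  then have "E\<^sup>*\<^sup>* i j" using conn i unfolding connected_graph_def by blast
  then obtain k where "E i k" using \<open>j \<noteq> i\<close> by (cases rule: converse_rtranclpE) auto
  then have "k \<in> nbrs i" using edgeD by (auto simp: mem_nbrs_iff)
  then show ?thesis unfolding degree_eq_card_nbrs using card_gt_0_iff by fastforce
qed

lemma q_eigenvalue_eigenvector_max_entry:
  assumes "e \<in># q_eigenvalues n E"
  obtains i0 y where "i0 < n" "0 < y i0" "\<And>j. j < n \<Longrightarrow> \<bar>y j\<bar> \<le> y i0"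
    and "\<And>i. i < n \<Longrightarrow> e * y i = real (deg i) * y i + (\<Sum>j\<in>nbrs i. y j)"
proof -
  obtain x where x0: "\<exists>i<n. x i \<noteq> 0"
    and xe: "\<And>i. i < n \<Longrightarrow> e * x i = real (deg i) * x i + (\<Sum>j\<in>nbrs i. x j)"
    using q_eigenvalue_eigenvector[OF assms] by blast
  obtain i0 where i0: "i0 < n" and max: "\<And>j. j < n \<Longrightarrow> \<bar>x j\<bar> \<le> \<bar>x i0\<bar>"
    using x0 Max_in[of "(\<lambda>i. \<bar>x i\<bar>) ` {..<n}"] Max_ge[of "(\<lambda>i. \<bar>x i\<bar>) ` {..<n}"] by fastforce
  have "0 < \<bar>x i0\<bar>" using x0 max by force
  define s where "s = sgn (x i0)"
  have "s * x i0 = \<bar>x i0\<bar>" "\<bar>s * x j\<bar> = \<bar>x j\<bar>" for j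
    using \<open>0 < \<bar>x i0\<bar>\<close> unfolding s_def by (auto simp: sgn_if abs_mult)
  moreover have "e * (s * x i) = real (deg i) * (s * x i) + (\<Sum>j\<in>nbrs i. s * x j)" if "i < n" for i
    using arg_cong[OF xe[OF that], of "\<lambda>t. s * t"]
    by (simp add: sum_distrib_left[symmetric] algebra_simps)
  ultimately show ?thesis using that[of i0 "\<lambda>i. s * x i"] i0 max \<open>0 < \<bar>x i0\<bar>\<close> by simp
qed

lemma eigen_equation_at_max_entry:
  assumes i: "i < n" and pos: "0 < y i" and max: "\<And>j. j < n \<Longrightarrow> \<bar>y j\<bar> \<le> y i"
    and eq: "e * y i = real (deg i) * y i + (\<Sum>j\<in>nbrs i. y j)"
  shows "0 \<le> e" and "e \<le> 2 * real (deg i)"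
    and "e = 2 * real (deg i) \<Longrightarrow> \<forall>k\<in>nbrs i. y k = y i"
proof -
  have bound: "\<bar>y k\<bar> \<le> y i" if "k \<in> nbrs i" for k using max that nbrs_subset by blast
  have "(\<Sum>k\<in>nbrs i. y k) \<le> real (deg i) * y i"
    using sum_mono[of "nbrs i" y "\<lambda>_. y i"] bound by (force simp: degree_eq_card_nbrs)
  moreover have "- (real (deg i) * y i) \<le> (\<Sum>k\<in>nbrs i. y k)"
    using sum_mono[of "nbrs i" "\<lambda>_. - y i" y] bound by (force simp: degree_eq_card_nbrs)
  ultimately have "e * y i \<le> (2 * real (deg i)) * y i" "0 \<le> e * y i" using eq by linarith+
  then show "0 \<le> e" "e \<le> 2 * real (deg i)" using pos by (simp_all add: zero_le_mult_iff)
  assume "e = 2 * real (deg i)"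
  then have "(\<Sum>k\<in>nbrs i. y i - y k) = 0"
    using eq by (simp add: sum_subtractf degree_eq_card_nbrs algebra_simps)
  moreover have "\<forall>k\<in>nbrs i. 0 \<le> y i - y k" using bound by force
  ultimately show "\<forall>k\<in>nbrs i. y k = y i" by (simp add: sum_nonneg_eq_0_iff)
qed

lemma q_eigenvalue_bounds:
  assumes "e \<in># q_eigenvalues n E"
  shows "0 \<le> e" and "e \<le> 2 * real (max_degree n E)"
proof -
  obtain i0 y where i0: "i0 < n" and pos: "0 < y i0" and max: "\<And>j. j < n \<Longrightarrow> \<bar>y j\<bar> \<le> y i0"
    and eq: "\<And>i. i < n \<Longrightarrow> e * y i = real (deg i) * y i + (\<Sum>j\<in>nbrs i. y j)"
    using q_eigenvalue_eigenvector_max_entry[OF assms] by blast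
  show "0 \<le> e" by (rule eigen_equation_at_max_entry(1)[OF i0 pos max eq[OF i0]])
  have "e \<le> 2 * real (deg i0)" by (rule eigen_equation_at_max_entry(2)[OF i0 pos max eq[OF i0]])
  moreover have "real (deg i0) \<le> real (max_degree n E)" using degree_le_max_degree[OF i0] by simp
  ultimately show "e \<le> 2 * real (max_degree n E)" by linarith
qed

lemma q_eigenvalue_less_twice_max_degree:
  assumes conn: "connected_graph n E" and nreg: "\<not> regular n E" and e: "e \<in># q_eigenvalues n E"
  shows "e < 2 * real (max_degree n E)"
proof (rule ccontr)
  assume "\<not> e < 2 * real (max_degree n E)"
  then have ge: "2 * real (max_degree n E) \<le> e" by simp
  obtain i0 y where i0: "i0 < n" and pos: "0 < y i0" and max: "\<And>j. j < n \<Longrightarrow> \<bar>y j\<bar> \<le> y i0"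
    and eq: "\<And>i. i < n \<Longrightarrow> e * y i = real (deg i) * y i + (\<Sum>j\<in>nbrs i. y j)"
    using q_eigenvalue_eigenvector_max_entry[OF e] by blast
  have at_max: "e = 2 * real (deg j) \<and> (\<forall>k\<in>nbrs j. y k = y i0)" if j: "j < n" "y j = y i0" for j
  proof -
    have pos_j: "0 < y j" and max_j: "\<And>k. k < n \<Longrightarrow> \<bar>y k\<bar> \<le> y j"
      using j pos max by auto
    have eq_j: "e * y j = real (deg j) * y j + (\<Sum>k\<in>nbrs j. y k)" by (rule eq[OF j(1)])
    have "e \<le> 2 * real (deg j)" by (rule eigen_equation_at_max_entry(2)[OF j(1) pos_j max_j eq_j])
    moreover have "deg j \<le> max_degree n E" using degree_le_max_degree j by simp
    ultimately have "e = 2 * real (deg j)" using ge by linarith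
    with eigen_equation_at_max_entry(3)[OF j(1) pos_j max_j eq_j] j show ?thesis by auto
  qed
  have reach: "y j = y i0" if "E\<^sup>*\<^sup>* i0 j" for j
    using that
  proof (induct rule: rtranclp_induct)
    case (step j k)
    then have "j < n" "k \<in> nbrs j" using edgeD[OF step(2)] by (auto simp: mem_nbrs_iff)
    then show ?case using at_max[OF \<open>j < n\<close> step(3)] by blast
  qed simp
  have "deg j = max_degree n E" if "j < n" for j
  proof -
    have "E\<^sup>*\<^sup>* i0 j" using conn i0 that unfolding connected_graph_def by blast
    then have "e = 2 * real (deg j)" using at_max[OF that reach] by blast
    then have "real (max_degree n E) \<le> real (deg j)" using ge by linarith
    then show ?thesis using degree_le_max_degree[OF that] by linarith
  qed
  then have "regular n E" unfolding regular_def by simp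
  with nreg show False ..
qed

lemma avg_deg_less_max_degree:
  assumes "0 < n" and "\<not> regular n E"
  shows "avg_deg n E < real (max_degree n E)"
proof -
  obtain q where q: "q < n" "deg q = min_degree n E" using min_degree_attained[OF assms(1)] .
  then have "deg q \<noteq> max_degree n E"
    using regular_iff_min_degree_eq_max_degree[OF assms(1)] assms(2) by simp
  with degree_le_max_degree[OF q(1)] have "deg q < max_degree n E" by simp
  then have "(\<Sum>i<n. real (deg i)) < (\<Sum>i<n. real (max_degree n E))"
    using q(1) by (intro sum_strict_mono_ex1) (auto intro: degree_le_max_degree)
  then show ?thesis unfolding avg_deg_eq_mean_degree using assms(1) by (simp add: divide_less_eq mult.commute)
qed

lemma sum_q_eigenvalues_shift_square_ge:
  assumes "0 < n"
  shows "2 * real (num_edges n E) + (1/2) * (real (max_degree n E) - real (min_degree n E))\<^sup>2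
         \<le> (\<Sum>e\<in>#q_eigenvalues n E. (e - c)\<^sup>2)"
proof (cases "max_degree n E = min_degree n E")
  case True
  then show ?thesis
    unfolding sum_q_eigenvalues_shift_square by (simp add: sum_nonneg)
next
  case False
  obtain p where p: "p < n" "deg p = max_degree n E" using max_degree_attained assms by blast
  obtain q where q: "q < n" "deg q = min_degree n E" using min_degree_attained assms by blast
  have "p \<noteq> q" using p q False by auto
  have "(real (max_degree n E) - real (min_degree n E))\<^sup>2 / 2
        \<le> (\<Sum>i\<in>{p, q}. (real (deg i) - c)\<^sup>2)"
    using half_square_diff_le_sum_squares \<open>p \<noteq> q\<close> p q by simp
  also have "\<dots> \<le> (\<Sum>i<n. (real (deg i) - c)\<^sup>2)" by (rule sum_mono2) (use p q in auto)
  finally show ?thesis unfolding sum_q_eigenvalues_shift_square by simp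
qed

theorem QE_gt_nonregular:
  assumes conn: "connected_graph n E" and n2: "n \<ge> 2" and nreg: "\<not> regular n E"
  shows "QE n E > (2 * real (num_edges n E)
                   + (1/2) * (real (max_degree n E) - real (min_degree n E))\<^sup>2)
                  / (2 * real (max_degree n E) - 2 * real (num_edges n E) / real n)"
proof -
  define a where "a = avg_deg n E"
  define M where "M = 2 * real (max_degree n E) - a"
  have a: "0 \<le> a" "a < real (max_degree n E)"
    using avg_deg_less_max_degree[OF _ nreg] n2 unfolding a_def avg_deg_def by auto
  then have "a < M" unfolding M_def by simp
  have below_M: "\<bar>e - a\<bar> < M" if "e \<in># q_eigenvalues n E" for e
    using q_eigenvalue_bounds(1)[OF that] q_eigenvalue_less_twice_max_degree[OF conn nreg that] a
    unfolding M_def by (simp add: abs_less_iff)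
  define S where "S = (\<Sum>e\<in>#q_eigenvalues n E. (e - a)\<^sup>2)"
  have lower: "2 * real (num_edges n E) + (1/2) * (real (max_degree n E) - real (min_degree n E))\<^sup>2 \<le> S"
    unfolding S_def using n2 by (intro sum_q_eigenvalues_shift_square_ge) simp
  have "max_degree n E \<noteq> min_degree n E"
    using regular_iff_min_degree_eq_max_degree n2 nreg by simp
  then have "0 < (1/2) * (real (max_degree n E) - real (min_degree n E))\<^sup>2" by simp
  then have "S \<noteq> 0" using lower by linarith
  have "\<exists>y\<in>#q_eigenvalues n E. y - a \<noteq> 0"
  proof (rule ccontr)
    assume "\<not> (\<exists>y\<in>#q_eigenvalues n E. y - a \<noteq> 0)"
    then have "S = (\<Sum>e\<in>#q_eigenvalues n E. 0)"
      unfolding S_def by (intro arg_cong[where f = sum_mset] image_mset_cong) auto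
    with \<open>S \<noteq> 0\<close> show False by simp
  qed
  then obtain y where y: "y \<in># q_eigenvalues n E" "y - a \<noteq> 0" by blast
  have "S < M * QE n E"
    unfolding S_def QE_def a_def[symmetric]
    using sum_mset_square_less_bound_mult_sum_mset_abs[of _ "\<lambda>e. e - a", OF below_M y] .
  with lower \<open>a < M\<close> a(1) have "(2 * real (num_edges n E) 
      + (1/2) * (real (max_degree n E) - real (min_degree n E))\<^sup>2) / M < QE n E"
    by (simp add: divide_less_eq mult.commute)
  then show ?thesis unfolding M_def a_def avg_deg_def .
qed

lemma nbrs_equal_or_disjoint_if_iso_complete_bipartite:
  assumes iso: "graph_iso n E (complete_bipartite a b)" and n: "n = a + b"
  shows "\<forall>i<n. \<forall>j<n. nbrs i = nbrs j \<or> nbrs i \<inter> nbrs j = {}"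
proof -
  obtain f where bij: "bij_betw f {0..<n} {0..<n}"
    and fE: "\<And>u v. u < n \<Longrightarrow> v < n \<Longrightarrow> E u v \<longleftrightarrow> complete_bipartite a b (f u) (f v)"
    using iso unfolding graph_iso_def by blast
  have "nbrs i = {j. j < n \<and> (f j < a) \<noteq> (f i < a)}" if "i < n" for i
    using fE[OF that] bij_betw_apply[OF bij] that n
    unfolding nbrs_def complete_bipartite_def by auto
  then show ?thesis by auto
qed

lemma complete_bipartition_if_nbrs_equal_or_disjoint:
  assumes conn: "connected_graph n E" and n: "0 < n" and s: "s \<in> nbrs 0"
    and eqdisj: "\<forall>i<n. \<forall>j<n. nbrs i = nbrs j \<or> nbrs i \<inter> nbrs j = {}"
  shows "{..<n} - nbrs s = nbrs 0"
    and "\<And>u v. u < n \<Longrightarrow> v < n \<Longrightarrow> E u v \<longleftrightarrow> (u \<in> nbrs s) \<noteq> (v \<in> nbrs s)"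
proof -
  define S where "S = nbrs 0"
  define T where "T = nbrs s"
  have Es: "E 0 s" "E s 0" "s < n" using s edgeD by (auto simp: mem_nbrs_iff)
  have share: "nbrs i = nbrs j" if "i < n" "j < n" "k \<in> nbrs i" "k \<in> nbrs j" for i j k
    using eqdisj that by blast
  have ST: "nbrs x = T" if "x \<in> S" for x
    using share[of x s 0] that Es n unfolding S_def T_def by (auto simp: mem_nbrs_iff dest: edgeD)
  have TS: "nbrs y = S" if "y \<in> T" for y
    using share[of y 0 s] that Es n unfolding S_def T_def by (auto simp: mem_nbrs_iff dest: edgeD)
  have disj: "S \<inter> T = {}"
  proof (rule ccontr)
    assume "S \<inter> T \<noteq> {}"
    then have "S = T" using ST TS by blast
    with s have "s \<in> nbrs s" unfolding S_def T_def by simp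
    then show False by (auto simp: mem_nbrs_iff dest: edgeD)
  qed
  have "v \<in> S \<union> T" if "E\<^sup>*\<^sup>* 0 v" for v
    using that
  proof (induct rule: rtranclp_induct)
    case base
    then show ?case using Es n unfolding T_def by (simp add: mem_nbrs_iff)
  next
    case (step u w)
    then have "w \<in> nbrs u" using edgeD by (auto simp: mem_nbrs_iff)
    then show ?case using step(3) ST TS by blast
  qed
  then have cover: "S \<union> T = {..<n}"
    using conn n nbrs_subset unfolding connected_graph_def S_def T_def by blast
  then show "{..<n} - nbrs s = nbrs 0" using disj unfolding S_def T_def by blast
  show "E u v \<longleftrightarrow> (u \<in> nbrs s) \<noteq> (v \<in> nbrs s)" if "u < n" "v < n" for u v
  proof (cases "u \<in> T")
    case True
    then show ?thesis using TS[OF True] that cover disj unfolding T_def by (auto simp: mem_nbrs_iff)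
  next
    case False
    then have "u \<in> S" using that cover by auto
    then show ?thesis using ST[OF \<open>u \<in> S\<close>] False that unfolding T_def by (auto simp: mem_nbrs_iff)
  qed
qed

definition adjacency :: "real mat" where
  "adjacency = mat n n (\<lambda>(i, j). if E i j then 1 else 0)"

lemma adjacency_carrier: "adjacency \<in> carrier_mat n n"
  unfolding adjacency_def by simp

lemma adjacency_square_entry:
  assumes "i < n" "j < n"
  shows "(adjacency * adjacency) $$ (i,j) = real (card (nbrs i \<inter> nbrs j))"
proof -
  have "(adjacency * adjacency) $$ (i,j) = (\<Sum>k<n. if E i k then (if E k j then 1 else 0) else 0)"
    using assms unfolding adjacency_def
    by (auto simp: scalar_prod_def row_def col_def lessThan_atLeast0 intro!: sum.cong)
  also have "\<dots> = (\<Sum>k\<in>nbrs i. if k \<in> nbrs j then 1 else 0)"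
    unfolding sum_adjacent using edgeD by (intro sum.cong refl) (auto simp: mem_nbrs_iff)
  also have "\<dots> = real (card (nbrs i \<inter> nbrs j))"
    by (simp add: sum.If_cases Int_def)
  finally show ?thesis .
qed

lemma mat_trace_adjacency_pow4:
  "mat_trace (adjacency ^\<^sub>m 4) = (\<Sum>i<n. \<Sum>j<n. (real (card (nbrs i \<inter> nbrs j)))\<^sup>2)"
proof -
  have A: "adjacency \<in> carrier_mat n n" by (rule adjacency_carrier)
  have "adjacency ^\<^sub>m 4 = adjacency * adjacency * adjacency * adjacency"
    using A by (simp add: eval_nat_numeral)
  also have "\<dots> = (adjacency * adjacency) * (adjacency * adjacency)"
    using A by (simp add: assoc_mult_mat[of _ n n _ n _ n])
  finally have "mat_trace (adjacency ^\<^sub>m 4)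
      = (\<Sum>i<n. \<Sum>j<n. (adjacency * adjacency) $$ (i,j) * (adjacency * adjacency) $$ (j,i))"
    using A by (simp add: mat_trace_mult[of _ n n])
  also have "\<dots> = (\<Sum>i<n. \<Sum>j<n. (real (card (nbrs i \<inter> nbrs j)))\<^sup>2)"
    by (intro sum.cong refl) (simp add: adjacency_square_entry power2_eq_square Int_commute)
  finally show ?thesis .
qed

lemma sum_card_common_nbrs: "(\<Sum>j<n. card (nbrs i \<inter> nbrs j)) = (\<Sum>k\<in>nbrs i. deg k)"
proof -
  have "card (nbrs i \<inter> nbrs j) = (\<Sum>k\<in>nbrs i. if j \<in> nbrs k then 1 else 0)" if "j < n" for j
  proof -
    have "nbrs i \<inter> nbrs j = {k \<in> nbrs i. j \<in> nbrs k}"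
      using that edgeD by (auto simp: mem_nbrs_iff)
    then show ?thesis by (simp add: sum.If_cases Int_def)
  qed
  then have "(\<Sum>j<n. card (nbrs i \<inter> nbrs j)) = (\<Sum>j<n. \<Sum>k\<in>nbrs i. if j \<in> nbrs k then 1 else 0)"
    by simp
  also have "\<dots> = (\<Sum>k\<in>nbrs i. \<Sum>j<n. if j \<in> nbrs k then 1 else 0)"
    by (rule sum.swap)
  also have "\<dots> = (\<Sum>k\<in>nbrs i. deg k)"
  proof (intro sum.cong refl)
    fix k
    have "{..<n} \<inter> nbrs k = nbrs k" using nbrs_subset by blast
    then show "(\<Sum>j<n. if j \<in> nbrs k then 1 else 0) = deg k"
      by (simp add: sum.If_cases degree_eq_card_nbrs)
  qed
  finally show ?thesis .
qed

end

section \<open>Regular graphs\<close>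

locale regular_sgraph = sgraph +
  fixes r :: nat
  assumes degree_regular: "i < n \<Longrightarrow> degree n E i = r"
    and order_pos: "0 < n"
begin

lemma max_degree_regular: "max_degree n E = r"
  using max_degree_attained[OF order_pos] degree_regular by metis

lemma avg_deg_regular: "avg_deg n E = real r"
  unfolding avg_deg_eq_mean_degree using order_pos by (simp add: degree_regular)

lemma QE_regular: "QE n E = (\<Sum>e\<in>#q_eigenvalues n E. \<bar>e - real r\<bar>)"
  unfolding QE_def avg_deg_regular ..

lemma abs_q_eigenvalue_minus_degree_le: "e \<in># q_eigenvalues n E \<Longrightarrow> \<bar>e - real r\<bar> \<le> real r"
  using q_eigenvalue_bounds[of e] max_degree_regular by auto

lemma sum_q_eigenvalues_shift_square_regular:
  "(\<Sum>e\<in>#q_eigenvalues n E. (e - real r)\<^sup>2) = real n * real r"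
  unfolding sum_q_eigenvalues_shift_square sum_real_degree[symmetric] by (simp add: degree_regular)

lemma sum_q_eigenvalues_shift_pow4_regular:
  "(\<Sum>e\<in>#q_eigenvalues n E. (e - real r) ^ 4) = (\<Sum>i<n. \<Sum>j<n. (real (card (nbrs i \<inter> nbrs j)))\<^sup>2)"
proof -
  have "Q + (- real r) \<cdot>\<^sub>m 1\<^sub>m n = adjacency"
    using signless_laplacian_carrier
    by (intro eq_matI) (auto simp: adjacency_def signless_laplacian_entry degree_regular)
  then show ?thesis unfolding power_sum_q_eigenvalues by (simp add: mat_trace_adjacency_pow4)
qed

lemma sum_card_common_nbrs_regular:
  "(\<Sum>i<n. \<Sum>j<n. real (card (nbrs i \<inter> nbrs j))) = real n * (real r)\<^sup>2"
proof -
  have "(\<Sum>j<n. real (card (nbrs i \<inter> nbrs j))) = (real r)\<^sup>2" if "i < n" for i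
  proof -
    have "(\<Sum>j<n. card (nbrs i \<inter> nbrs j)) = r * r"
      unfolding sum_card_common_nbrs using that nbrs_subset
      by (simp add: degree_regular degree_eq_card_nbrs[symmetric] subset_iff)
    then show ?thesis by (metis of_nat_mult of_nat_sum power2_eq_square)
  qed
  then show ?thesis by simp
qed

lemma card_common_nbrs_le: "i < n \<Longrightarrow> card (nbrs i \<inter> nbrs j) \<le> r"
  using card_mono[of "nbrs i" "nbrs i \<inter> nbrs j"] degree_regular degree_eq_card_nbrs by fastforce

theorem QE_ge_order:
  assumes "0 < r" shows "real n \<le> QE n E"
proof -
  have "real n * real r \<le> real r * QE n E"
    unfolding QE_regular sum_q_eigenvalues_shift_square_regular[symmetric]
    using abs_q_eigenvalue_minus_degree_le by (rule sum_mset_square_le_bound_mult_sum_mset_abs)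
  then show ?thesis using assms by (simp add: mult.commute)
qed

lemma QE_eq_order_iff_spectrum:
  assumes "0 < r"
  shows "QE n E = real n \<longleftrightarrow> (\<forall>e\<in>#q_eigenvalues n E. e - real r = 0 \<or> \<bar>e - real r\<bar> = real r)"
proof -
  have "QE n E = real n \<longleftrightarrow> (\<Sum>e\<in>#q_eigenvalues n E. (e - real r)\<^sup>2) = real r * QE n E"
    unfolding sum_q_eigenvalues_shift_square_regular using assms by auto
  also have "\<dots> \<longleftrightarrow> (\<forall>e\<in>#q_eigenvalues n E. e - real r = 0 \<or> \<bar>e - real r\<bar> = real r)"
    unfolding QE_regular using abs_q_eigenvalue_minus_degree_le
    by (rule sum_mset_square_eq_bound_mult_sum_mset_abs_iff)
  finally show ?thesis .
qed

lemma spectrum_iff_fourth_moment: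
  "(\<forall>e\<in>#q_eigenvalues n E. e - real r = 0 \<or> \<bar>e - real r\<bar> = real r) \<longleftrightarrow>
   (\<Sum>e\<in>#q_eigenvalues n E. (e - real r) ^ 4) = (real r)\<^sup>2 * (\<Sum>e\<in>#q_eigenvalues n E. (e - real r)\<^sup>2)"
proof -
  have sq: "(x = 0 \<or> \<bar>x\<bar> = real r) \<longleftrightarrow> (x\<^sup>2 = 0 \<or> \<bar>x\<^sup>2\<bar> = (real r)\<^sup>2)" for x :: real
  proof -
    have "\<bar>x\<^sup>2\<bar> = (real r)\<^sup>2 \<longleftrightarrow> \<bar>x\<bar> = real r"
      using power2_eq_iff_nonneg[of "\<bar>x\<bar>" "real r"] by simp
    then show ?thesis by simp
  qed
  have bound: "\<bar>(e - real r)\<^sup>2\<bar> \<le> (real r)\<^sup>2" if "e \<in># q_eigenvalues n E" for e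
    using abs_q_eigenvalue_minus_degree_le[OF that] abs_le_square_iff[of "e - real r" "real r"] by simp
  have pow4: "(\<Sum>e\<in>#q_eigenvalues n E. ((e - real r)\<^sup>2)\<^sup>2) = (\<Sum>e\<in>#q_eigenvalues n E. (e - real r) ^ 4)"
    by (simp add: power_mult[symmetric])
  have "(\<forall>e\<in>#q_eigenvalues n E. e - real r = 0 \<or> \<bar>e - real r\<bar> = real r) \<longleftrightarrow>
        (\<forall>e\<in>#q_eigenvalues n E. (e - real r)\<^sup>2 = 0 \<or> \<bar>(e - real r)\<^sup>2\<bar> = (real r)\<^sup>2)"
    by (rule ball_cong[OF refl sq])
  also have "\<dots> \<longleftrightarrow> (\<Sum>e\<in>#q_eigenvalues n E. ((e - real r)\<^sup>2)\<^sup>2)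
      = (real r)\<^sup>2 * (\<Sum>e\<in>#q_eigenvalues n E. \<bar>(e - real r)\<^sup>2\<bar>)"
    using bound by (rule sum_mset_square_eq_bound_mult_sum_mset_abs_iff[symmetric])
  finally show ?thesis unfolding pow4 abs_power2 .
qed

lemma fourth_moment_iff_nbrs_equal_or_disjoint:
  "(\<Sum>e\<in>#q_eigenvalues n E. (e - real r) ^ 4) = (real r)\<^sup>2 * (\<Sum>e\<in>#q_eigenvalues n E. (e - real r)\<^sup>2)
   \<longleftrightarrow> (\<forall>i<n. \<forall>j<n. nbrs i = nbrs j \<or> nbrs i \<inter> nbrs j = {})"
proof -
  define c where "c = (\<lambda>(i, j). real (card (nbrs i \<inter> nbrs j)))"
  have double_sum: "(\<Sum>i<n. \<Sum>j<n. g i j) = (\<Sum>p\<in>{..<n} \<times> {..<n}. g (fst p) (snd p))"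
    for g :: "nat \<Rightarrow> nat \<Rightarrow> real" by (simp add: sum.cartesian_product case_prod_beta)
  have "(real r)\<^sup>2 * (\<Sum>e\<in>#q_eigenvalues n E. (e - real r)\<^sup>2) = real r * (\<Sum>p\<in>{..<n} \<times> {..<n}. \<bar>c p\<bar>)"
    using sum_card_common_nbrs_regular
    unfolding sum_q_eigenvalues_shift_square_regular double_sum c_def
    by (simp add: case_prod_beta power2_eq_square)
  moreover have "(\<Sum>e\<in>#q_eigenvalues n E. (e - real r) ^ 4) = (\<Sum>p\<in>{..<n} \<times> {..<n}. (c p)\<^sup>2)"
    unfolding sum_q_eigenvalues_shift_pow4_regular double_sum c_def by (simp add: case_prod_beta)
  moreover have "(\<Sum>p\<in>{..<n} \<times> {..<n}. (c p)\<^sup>2) = real r * (\<Sum>p\<in>{..<n} \<times> {..<n}. \<bar>c p\<bar>)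
      \<longleftrightarrow> (\<forall>p\<in>{..<n} \<times> {..<n}. c p = 0 \<or> \<bar>c p\<bar> = real r)"
    by (rule sum_square_eq_bound_mult_sum_abs_iff) (auto simp: c_def card_common_nbrs_le)
  moreover have "(\<forall>p\<in>{..<n} \<times> {..<n}. c p = 0 \<or> \<bar>c p\<bar> = real r)
      \<longleftrightarrow> (\<forall>i<n. \<forall>j<n. nbrs i = nbrs j \<or> nbrs i \<inter> nbrs j = {})"
  proof -
    have "c (i, j) = 0 \<or> \<bar>c (i, j)\<bar> = real r \<longleftrightarrow> nbrs i = nbrs j \<or> nbrs i \<inter> nbrs j = {}"
      if "i < n" "j < n" for i j
    proof -
      have "card (nbrs i) = r" "card (nbrs j) = r"
        using that degree_regular degree_eq_card_nbrs by auto
      then have "card (nbrs i \<inter> nbrs j) = r \<longleftrightarrow> nbrs i = nbrs j"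
        by (metis Int_lower1 Int_lower2 card_subset_eq finite_nbrs inf.idem)
      then show ?thesis unfolding c_def by auto
    qed
    then show ?thesis by (simp add: Ball_def) blast
  qed
  ultimately show ?thesis by simp
qed

lemma nbrs_equal_or_disjoint_iff_complete_bipartite:
  assumes conn: "connected_graph n E" and r: "0 < r"
  shows "(\<forall>i<n. \<forall>j<n. nbrs i = nbrs j \<or> nbrs i \<inter> nbrs j = {})
         \<longleftrightarrow> even n \<and> graph_iso n E (complete_bipartite (n div 2) (n div 2))"
proof
  assume eqdisj: "\<forall>i<n. \<forall>j<n. nbrs i = nbrs j \<or> nbrs i \<inter> nbrs j = {}"
  have card_nbrs: "card (nbrs i) = r" if "i < n" for i
    using that degree_regular degree_eq_card_nbrs by auto
  then obtain s where s: "s \<in> nbrs 0" using r order_pos by fastforce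
  then have "s < n" by (simp add: mem_nbrs_iff)
  note bip = complete_bipartition_if_nbrs_equal_or_disjoint[OF conn order_pos s eqdisj]
  have "graph_iso n E (complete_bipartite r r)"
    using nbrs_subset bip card_nbrs[OF \<open>s < n\<close>] card_nbrs[OF order_pos]
    by (intro graph_iso_complete_bipartite_if_bipartition) auto
  moreover have "n = r + r"
    using card_Diff_subset[OF finite_nbrs nbrs_subset, of s] bip(1) card_nbrs[OF \<open>s < n\<close>]
      card_nbrs[OF order_pos] card_mono[OF _ nbrs_subset, of s] by simp
  ultimately show "even n \<and> graph_iso n E (complete_bipartite (n div 2) (n div 2))" by simp
next
  assume "even n \<and> graph_iso n E (complete_bipartite (n div 2) (n div 2))"
  then show "\<forall>i<n. \<forall>j<n. nbrs i = nbrs j \<or> nbrs i \<inter> nbrs j = {}"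
    by (intro nbrs_equal_or_disjoint_if_iso_complete_bipartite) auto
qed

end

theorem mainTheorem11:
  fixes n :: nat and E :: "nat \<Rightarrow> nat \<Rightarrow> bool"
  assumes "simple_graph n E"
    and "connected_graph n E"
    and "n \<ge> 2"
    and "gammas n E ! (n - 1) = 0"
  shows "(\<not> regular n E \<longrightarrow>
            QE n E > (2 * real (num_edges n E)
                       + (1/2) * (real (max_degree n E) - real (min_degree n E))^2)
                     / (2 * real (max_degree n E) - 2 * real (num_edges n E) / real n))
       \<and> (regular n E \<longrightarrow>
            QE n E \<ge> real n
            \<and> (QE n E = real n \<longleftrightarrow>
                 (even n \<and> graph_iso n E (complete_bipartite (n div 2) (n div 2)))))"
proof -
  interpret sgraph n E by (rule sgraph.intro) (rule assms(1))
  have regular_case: "QE n E \<ge> real n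
      \<and> (QE n E = real n \<longleftrightarrow> (even n \<and> graph_iso n E (complete_bipartite (n div 2) (n div 2))))"
    if reg: "regular n E"
  proof -
    have n0: "0 < n" using assms(3) by simp
    define r where "r = degree n E 0"
    interpret regular_sgraph n E r
    proof unfold_locales
      show "degree n E i = r" if "i < n" for i
        using reg that n0 unfolding regular_def r_def by blast
    qed (rule n0)
    have r: "0 < r" unfolding r_def by (rule degree_pos_if_connected[OF assms(2,3) n0])
    have "QE n E = real n \<longleftrightarrow> even n \<and> graph_iso n E (complete_bipartite (n div 2) (n div 2))"
      unfolding QE_eq_order_iff_spectrum[OF r] spectrum_iff_fourth_moment
        fourth_moment_iff_nbrs_equal_or_disjoint
      by (rule nbrs_equal_or_disjoint_iff_complete_bipartite[OF assms(2) r])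
    with QE_ge_order[OF r] show ?thesis by blast
  qed
  show ?thesis
    using QE_gt_nonregular[OF assms(2,3)] regular_case by blast
qed

end
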